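(* Let $X$ be a finite-dimensional real Hilbert space and let $\mathcal{C}$ be a nonempty finite collection of nonempty polyhedral subsets of $X$. Let $\lambda\in[0,2[$ and $x_0\in X$. Generate a sequence $(x_n)_{n\in\mathbb{N}}$ as follows: given $x_n$, pick any $R_n\in\mathcal{R}_{\mathcal{C},[0,\lambda]}$ (the choice may depend arbitrarily on $n$ and on the past) and set $x_{n+1}:=R_n x_n$. Then the sequence $(x_n)_{n\in\mathbb{N}}$ is bounded.
   Context: A subset of $X$ is polyhedral if it is the intersection of finitely many closed halfspaces. For a nonempty closed convex set $C$, $P_C$ is the orthogonal (nearest-point) projector onto $C$, and $\mathrm{Id}$ is the identity on $X$. For a finite collection $\mathcal{C}$ of nonempty closed convex sets and an interval $\Lambda\subseteq[0,2]$, the set of relaxed projectors is \[ \mathcal{R}_{\mathcal{C},\Lambda}:=\{(1-\mu)\mathrm{Id}+\mu P_C : C\in\mathcal{C},\ \mu\in\Lambda\}. \] *)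

theory Defs
  imports "HOL-Analysis.Analysis"
begin

definition relaxed_projectors ::
  "'a::euclidean_space set set \<Rightarrow> real set \<Rightarrow> ('a \<Rightarrow> 'a) set" where
  "relaxed_projectors \<C> \<Lambda> =
     {(\<lambda>x. (1 - \<mu>) *\<^sub>R x + \<mu> *\<^sub>R closest_point C x) | C \<mu>. C \<in> \<C> \<and> \<mu> \<in> \<Lambda>}"

end

(*
  The closest point of a polyhedron C to x is also the closest point to x of the affine
  set cut out by the constraints of C active there.  So the projector onto C agrees
  pointwise with projectors onto finitely many affine sets, and it suffices to treat a
  finite family F of nonempty affine sets.  A relaxed projection onto A in F moves x
  orthogonally to the direction space of A, hence does not change the projection of x
  onto the common direction space W of F; only the distance of x to W can grow.

  That this distance grows by at most a constant along every orbit is shown by induction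
  over subfamilies.  Given a start x 0, choose by pigeonhole a threshold separating the
  sets near x 0 (a proper subfamily J) from those much farther away.  The steps towards
  near sets form an orbit of J, which by induction stays close to x 0, so the far sets
  remain far; a step towards a far set then decreases the squared norm by an amount
  proportional to its length.  Consequently the distance to W may rise by a bounded amount
  before the far steps have accumulated unit length, at which point it has returned
  below its initial value and the argument restarts.  If no set is far, an error bound
  (the distance of x to W is controlled by its distances to the sets of F) bounds x 0.
*)
theory Submission
  imports Defs
begin

section \<open>Projections onto affine sets and subspaces\<close>

lemma closest_point_eqI:
  fixes A :: "'a::euclidean_space set"
  assumes "convex A" "closed A" "p \<in> A" and obtuse: "\<And>z. z \<in> A \<Longrightarrow> (x - p) \<bullet> (z - p) \<le> 0"
  shows "closest_point A x = p"
proof -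
  have "dist x p \<le> dist x z" if "z \<in> A" for z
  proof -
    have "(x - z) \<bullet> (x - z) = (x - p) \<bullet> (x - p) + (z - p) \<bullet> (z - p) - 2 * ((x - p) \<bullet> (z - p))"
      by (simp add: algebra_simps inner_diff_left inner_diff_right inner_commute)
    then have "(x - p) \<bullet> (x - p) \<le> (x - z) \<bullet> (x - z)"
      using obtuse[OF that] inner_ge_zero[of "z - p"] by linarith
    then show ?thesis
      by (simp add: dist_norm norm_le)
  qed
  then show ?thesis
    using closest_point_unique[OF assms(1-3)] by auto
qed

lemma dist_closest_point_triangle:
  assumes "closed A" "A \<noteq> {}"
  shows "norm (x - closest_point A x) \<le> norm (x - y) + norm (y - closest_point A y)"
proof -
  have "dist x (closest_point A x) \<le> dist x (closest_point A y)"
    using closest_point_le[OF assms(1) closest_point_in_set[OF assms]] .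
  also have "\<dots> \<le> dist x y + dist y (closest_point A y)"
    by (rule dist_triangle)
  finally show ?thesis
    by (simp add: dist_norm)
qed

lemma closest_point_affine_orthogonal:
  fixes A :: "'a::euclidean_space set"
  assumes "affine A" "A \<noteq> {}" "y \<in> A"
  shows "(y - closest_point A x) \<bullet> (x - closest_point A x) = 0"
proof -
  let ?p = "closest_point A x"
  have p: "?p \<in> A"
    using assms by (simp add: closest_point_in_set affine_closed)
  have reflected: "?p + (-1) *\<^sub>R (y - ?p) \<in> A"
    using mem_affine_3_minus[OF assms(1) p assms(3) p] .
  have "(x - ?p) \<bullet> (z - ?p) \<le> 0" if "z \<in> A" for z
    using closest_point_dot[OF affine_imp_convex affine_closed] assms(1) that by blast
  from this[OF assms(3)] this[OF reflected] show ?thesis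
    by (simp add: inner_commute inner_diff_right)
qed

lemma closest_point_affine_eqI:
  fixes A :: "'a::euclidean_space set"
  assumes "affine A" "p \<in> A" "\<And>y. y \<in> A \<Longrightarrow> (y - p) \<bullet> (x - p) = 0"
  shows "closest_point A x = p"
  using assms
  by (intro closest_point_eqI) (auto simp: affine_imp_convex affine_closed inner_commute)

definition directions :: "'a::real_vector set \<Rightarrow> 'a set" where
  "directions A = {y - z | y z. y \<in> A \<and> z \<in> A}"

lemma subspace_directions:
  assumes "affine A" "A \<noteq> {}"
  shows "subspace (directions A)"
  unfolding subspace_def
proof (intro conjI ballI allI)
  obtain a where "a \<in> A" using assms(2) by blast
  then show "0 \<in> directions A"
    unfolding directions_def by force
next
  fix d e assume "d \<in> directions A" "e \<in> directions A"
  then obtain y z y' z' where "d = y - z" "e = y' - z'" "y \<in> A" "z \<in> A" "y' \<in> A" "z' \<in> A"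
    unfolding directions_def by blast
  moreover have "y + 1 *\<^sub>R (y' - z') \<in> A"
    using mem_affine_3_minus assms(1) calculation by blast
  moreover have "d + e = (y + 1 *\<^sub>R (y' - z')) - z"
    using calculation by simp
  ultimately show "d + e \<in> directions A"
    unfolding directions_def by blast
next
  fix c :: real and d assume "d \<in> directions A"
  then obtain y z where "d = y - z" "y \<in> A" "z \<in> A"
    unfolding directions_def by blast
  moreover have "z + c *\<^sub>R (y - z) \<in> A"
    using mem_affine_3_minus assms(1) calculation by blast
  moreover have "c *\<^sub>R d = (z + c *\<^sub>R (y - z)) - z"
    using calculation by simp
  ultimately show "c *\<^sub>R d \<in> directions A"
    unfolding directions_def by blast
qed

lemma directions_orthogonal_closest_point:
  fixes A :: "'a::euclidean_space set"
  assumes "affine A" "A \<noteq> {}" "d \<in> directions A"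
  shows "d \<bullet> (x - closest_point A x) = 0"
proof -
  obtain y z where "d = (y - closest_point A x) - (z - closest_point A x)" "y \<in> A" "z \<in> A"
    using assms(3) unfolding directions_def by auto
  then show ?thesis
    using closest_point_affine_orthogonal[OF assms(1,2)] by (simp add: inner_diff_left)
qed

lemma closest_point_in_subspace:
  fixes W :: "'a::euclidean_space set"
  shows "subspace W \<Longrightarrow> closest_point W x \<in> W"
  using closest_point_in_set closed_subspace subspace_0 by blast

lemma closest_point_subspace_orthogonal:
  fixes W :: "'a::euclidean_space set"
  assumes "subspace W" "w \<in> W"
  shows "(x - closest_point W x) \<bullet> w = 0"
proof -
  have "closest_point W x + w \<in> W"
    using assms closest_point_in_subspace subspace_add by blast
  from closest_point_affine_orthogonal[OF subspace_imp_affine[OF assms(1)] _ this, of x]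
  show ?thesis
    using assms(1) subspace_0 by (fastforce simp: inner_commute)
qed

lemma closest_point_subspace_eqI:
  fixes W :: "'a::euclidean_space set"
  assumes "subspace W" "p \<in> W" "\<And>w. w \<in> W \<Longrightarrow> (x - p) \<bullet> w = 0"
  shows "closest_point W x = p"
  using assms
  by (intro closest_point_affine_eqI subspace_imp_affine) (auto simp: inner_commute subspace_diff)

lemma linear_closest_point_subspace:
  fixes W :: "'a::euclidean_space set"
  assumes "subspace W"
  shows "linear (closest_point W)"
proof -
  note P = closest_point_in_subspace[OF assms]
  note orth = closest_point_subspace_orthogonal[OF assms]
  show ?thesis
  proof (rule linearI)
    fix x y
    have "(x + y - (closest_point W x + closest_point W y)) \<bullet> w = 0" if "w \<in> W" for w
      using orth[OF that, of x] orth[OF that, of y]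
      by (simp add: inner_diff_left inner_add_left)
    then show "closest_point W (x + y) = closest_point W x + closest_point W y"
      using P assms by (intro closest_point_subspace_eqI) (auto simp: subspace_add)
  next
    fix c x
    have "(c *\<^sub>R x - c *\<^sub>R closest_point W x) \<bullet> w = 0" if "w \<in> W" for w
      using orth[OF that, of x] by (simp add: inner_diff_left)
    then show "closest_point W (c *\<^sub>R x) = c *\<^sub>R closest_point W x"
      using P assms by (intro closest_point_subspace_eqI) (auto simp: subspace_scale)
  qed
qed

lemma closest_point_subspace_add_orthogonal:
  fixes W :: "'a::euclidean_space set"
  assumes "subspace W" "\<And>w. w \<in> W \<Longrightarrow> v \<bullet> w = 0"
  shows "closest_point W (x + v) = closest_point W x"
proof -
  have "closest_point W v = 0"
    using assms by (intro closest_point_subspace_eqI) (auto simp: subspace_0)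
  then show ?thesis
    using linear_add[OF linear_closest_point_subspace[OF assms(1)]] by simp
qed

lemma residual_subspace_diff_mem:
  fixes W :: "'a::euclidean_space set"
  assumes "subspace W" "w \<in> W"
  shows "(x - w) - closest_point W (x - w) = x - closest_point W x"
  using linear_diff[OF linear_closest_point_subspace[OF assms(1)]] closest_point_self[OF assms(2)]
  by simp

lemma residual_subspace_scaleR:
  fixes W :: "'a::euclidean_space set"
  assumes "subspace W"
  shows "c *\<^sub>R x - closest_point W (c *\<^sub>R x) = c *\<^sub>R (x - closest_point W x)"
  using linear_scale[OF linear_closest_point_subspace[OF assms]] by (simp add: scaleR_diff_right)

lemma norm_closest_point_subspace_pythagorean:
  fixes W :: "'a::euclidean_space set"
  assumes "subspace W"
  shows "(norm x)\<^sup>2 = (norm (closest_point W x))\<^sup>2 + (norm (x - closest_point W x))\<^sup>2"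
proof -
  have "orthogonal (closest_point W x) (x - closest_point W x)"
    using closest_point_subspace_orthogonal[OF assms closest_point_in_subspace[OF assms]]
    by (simp add: orthogonal_def inner_commute)
  from norm_add_Pythagorean[OF this] show ?thesis
    by simp
qed

lemma residual_subspace_nonexpansive:
  fixes W :: "'a::euclidean_space set"
  assumes "subspace W"
  shows "norm ((x - closest_point W x) - (y - closest_point W y)) \<le> norm (x - y)"
proof -
  have "(x - closest_point W x) - (y - closest_point W y) = (x - y) - closest_point W (x - y)"
    using linear_diff[OF linear_closest_point_subspace[OF assms]] by simp
  moreover have "(norm ((x - y) - closest_point W (x - y)))\<^sup>2 \<le> (norm (x - y))\<^sup>2"
    using norm_closest_point_subspace_pythagorean[OF assms, of "x - y"] by simp
  then have "norm ((x - y) - closest_point W (x - y)) \<le> norm (x - y)"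
    by (rule power2_le_imp_le) simp
  ultimately show ?thesis
    by (simp only:)
qed

section \<open>Relaxed projections\<close>

definition relaxed_projection :: "'a::euclidean_space set \<Rightarrow> real \<Rightarrow> 'a \<Rightarrow> 'a" where
  "relaxed_projection A \<mu> x = (1 - \<mu>) *\<^sub>R x + \<mu> *\<^sub>R closest_point A x"

lemma relaxed_projectors_eq:
  "relaxed_projectors \<C> \<Lambda> = {relaxed_projection C \<mu> | C \<mu>. C \<in> \<C> \<and> \<mu> \<in> \<Lambda>}"
  unfolding relaxed_projectors_def relaxed_projection_def[abs_def] ..

lemma relaxed_projection_eq: "relaxed_projection A \<mu> x = x - \<mu> *\<^sub>R (x - closest_point A x)"
  by (simp add: relaxed_projection_def algebra_simps)

lemma relaxed_projection_0 [simp]: "relaxed_projection A 0 x = x"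
  by (simp add: relaxed_projection_def)

lemma norm_relaxed_projection_step:
  "norm (relaxed_projection A \<mu> x - x) = \<bar>\<mu>\<bar> * norm (x - closest_point A x)"
  by (simp add: relaxed_projection_eq)

lemma closest_point_relaxed_projection:
  fixes A W :: "'a::euclidean_space set"
  assumes "affine A" "A \<noteq> {}" "subspace W" "W \<subseteq> directions A"
  shows "closest_point W (relaxed_projection A \<mu> x) = closest_point W x"
proof -
  have "(- \<mu> *\<^sub>R (x - closest_point A x)) \<bullet> w = 0" if "w \<in> W" for w
    using directions_orthogonal_closest_point[OF assms(1,2)] assms(4) that
    by (auto simp: inner_commute)
  moreover have "relaxed_projection A \<mu> x = x + (- \<mu> *\<^sub>R (x - closest_point A x))"
    by (simp add: relaxed_projection_eq)
  ultimately show ?thesis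
    using closest_point_subspace_add_orthogonal[OF assms(3)] by presburger
qed

lemma relaxed_projection_nonexpansive:
  fixes A :: "'a::euclidean_space set"
  assumes "affine A" "A \<noteq> {}" "0 \<le> \<mu>" "\<mu> \<le> 2"
  shows "norm (relaxed_projection A \<mu> x - relaxed_projection A \<mu> y) \<le> norm (x - y)"
proof -
  define p q where "p = closest_point A x" and "q = closest_point A y"
  have "p \<in> A" "q \<in> A"
    using assms(1,2) by (simp_all add: p_def q_def closest_point_in_set affine_closed)
  then have "(q - p) \<bullet> (x - p) = 0" "(p - q) \<bullet> (y - q) = 0"
    using closest_point_affine_orthogonal[OF assms(1,2)] by (simp_all add: p_def q_def)
  then have orth: "orthogonal (p - q) ((x - p) - (y - q))"
    by (simp add: orthogonal_def inner_diff_right inner_diff_left)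
  have "x - y = (p - q) + ((x - p) - (y - q))"
    by simp
  then have xy: "(norm (x - y))\<^sup>2 = (norm (p - q))\<^sup>2 + (norm ((x - p) - (y - q)))\<^sup>2"
    using norm_add_Pythagorean[OF orth] by simp
  have "relaxed_projection A \<mu> x - relaxed_projection A \<mu> y
          = (p - q) + (1 - \<mu>) *\<^sub>R ((x - p) - (y - q))"
    by (simp add: relaxed_projection_def p_def q_def algebra_simps)
  then have T: "(norm (relaxed_projection A \<mu> x - relaxed_projection A \<mu> y))\<^sup>2
                 = (norm (p - q))\<^sup>2 + (1 - \<mu>)\<^sup>2 * (norm ((x - p) - (y - q)))\<^sup>2"
    using norm_add_Pythagorean[of "p - q" "(1 - \<mu>) *\<^sub>R ((x - p) - (y - q))"] orth
    by (simp add: orthogonal_clauses power_mult_distrib)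
  have "\<mu> * (\<mu> - 2) \<le> 0"
    using assms(3,4) by (intro mult_nonneg_nonpos) auto
  then have "(1 - \<mu>)\<^sup>2 \<le> 1"
    by (simp add: power2_eq_square algebra_simps)
  then have "(1 - \<mu>)\<^sup>2 * (norm ((x - p) - (y - q)))\<^sup>2 \<le> (norm ((x - p) - (y - q)))\<^sup>2"
    by (simp add: mult_left_le_one_le)
  then have "(norm (relaxed_projection A \<mu> x - relaxed_projection A \<mu> y))\<^sup>2 \<le> (norm (x - y))\<^sup>2"
    using T xy by linarith
  then show ?thesis
    by (rule power2_le_imp_le) simp
qed

lemma norm_relaxed_projection_sq:
  fixes A :: "'a::euclidean_space set"
  assumes "affine A" "A \<noteq> {}"
  shows "(norm (relaxed_projection A \<mu> x))\<^sup>2 = (norm x)\<^sup>2 - \<mu> * (2 - \<mu>) * (norm (x - closest_point A x))\<^sup>2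
           - 2 * \<mu> * (closest_point A 0 \<bullet> (x - closest_point A x))"
proof -
  define p d q where "p = closest_point A x" and "d = x - p" and "q = closest_point A 0"
  have "q \<in> A"
    using assms by (simp add: q_def closest_point_in_set affine_closed)
  then have "(q - p) \<bullet> d = 0"
    using closest_point_affine_orthogonal[OF assms] by (simp add: p_def d_def)
  then have xd: "x \<bullet> d = d \<bullet> d + q \<bullet> d"
    by (simp add: d_def inner_diff_left algebra_simps)
  have "(norm (x - \<mu> *\<^sub>R d))\<^sup>2 = x \<bullet> x - 2 * \<mu> * (x \<bullet> d) + \<mu> * \<mu> * (d \<bullet> d)"
    by (simp add: power2_norm_eq_inner inner_diff_left inner_diff_right inner_commute algebra_simps)
  also have "\<dots> = (norm x)\<^sup>2 - \<mu> * (2 - \<mu>) * (norm d)\<^sup>2 - 2 * \<mu> * (q \<bullet> d)"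
    using xd by (simp add: power2_norm_eq_inner algebra_simps)
  finally show ?thesis
    by (simp add: relaxed_projection_eq p_def d_def q_def)
qed

lemma norm_relaxed_projection_sq_le:
  fixes A :: "'a::euclidean_space set"
  assumes "affine A" "A \<noteq> {}" "0 \<le> \<mu>" "norm (closest_point A 0) \<le> r"
  shows "(norm (relaxed_projection A \<mu> x))\<^sup>2 \<le> (norm x)\<^sup>2 - \<mu> * (2 - \<mu>) * (norm (x - closest_point A x))\<^sup>2
           + 2 * \<mu> * r * norm (x - closest_point A x)"
proof -
  have "- (closest_point A 0 \<bullet> (x - closest_point A x)) \<le> r * norm (x - closest_point A x)"
    using Cauchy_Schwarz_ineq2[of "closest_point A 0" "x - closest_point A x"]
      mult_right_mono[OF assms(4) norm_ge_zero[of "x - closest_point A x"]]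
      abs_ge_minus_self[of "closest_point A 0 \<bullet> (x - closest_point A x)"]
    by linarith
  from mult_left_mono[OF this, of "2 * \<mu>"] show ?thesis
    using norm_relaxed_projection_sq[OF assms(1,2), of \<mu> x] assms(3) by simp
qed

lemma completed_square_le:
  fixes \<mu> lam r d :: real
  assumes "0 \<le> \<mu>" "\<mu> \<le> lam" "lam < 2"
  shows "2 * \<mu> * r * d - \<mu> * (2 - \<mu>) * d\<^sup>2 \<le> 2 * r\<^sup>2 / (2 - lam)"
proof -
  define k where "k = 2 - lam"
  have k: "0 < k" "k \<le> 2 - \<mu>"
    using assms by (simp_all add: k_def)
  have "0 \<le> \<mu> / k * (k * d - r)\<^sup>2"
    using assms(1) k(1) by simp
  also have "\<mu> / k * (k * d - r)\<^sup>2 = \<mu> * k * d\<^sup>2 - 2 * \<mu> * r * d + \<mu> * r\<^sup>2 / k"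
    using k(1) by (simp add: power2_eq_square field_simps)
  finally have "2 * \<mu> * r * d - \<mu> * k * d\<^sup>2 \<le> \<mu> * r\<^sup>2 / k"
    by simp
  moreover have "\<mu> * k * d\<^sup>2 \<le> \<mu> * (2 - \<mu>) * d\<^sup>2"
    using assms(1) k(2) by (intro mult_right_mono mult_left_mono) auto
  moreover have "\<mu> * r\<^sup>2 / k \<le> 2 * r\<^sup>2 / k"
    using assms k(1) by (intro divide_right_mono mult_right_mono) auto
  ultimately show ?thesis
    by (simp add: k_def)
qed

lemma norm_relaxed_projection_sq_le_add:
  fixes A :: "'a::euclidean_space set"
  assumes "affine A" "A \<noteq> {}" "0 \<le> \<mu>" "\<mu> \<le> lam" "lam < 2" "norm (closest_point A 0) \<le> r"
  shows "(norm (relaxed_projection A \<mu> x))\<^sup>2 \<le> (norm x)\<^sup>2 + 2 * r\<^sup>2 / (2 - lam)"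
  using norm_relaxed_projection_sq_le[OF assms(1-3,6), of x]
    completed_square_le[OF assms(3-5), of r "norm (x - closest_point A x)"]
  by linarith

lemma norm_relaxed_projection_sq_le_far:
  fixes A :: "'a::euclidean_space set"
  assumes "affine A" "A \<noteq> {}" "0 \<le> \<mu>" "\<mu> \<le> lam" "lam < 2" "norm (closest_point A 0) \<le> r"
    and far: "R \<le> norm (x - closest_point A x)" and R: "2 * r \<le> (2 - lam) * R / 2"
  shows "(norm (relaxed_projection A \<mu> x))\<^sup>2
           \<le> (norm x)\<^sup>2 - (2 - lam) * R / 2 * norm (relaxed_projection A \<mu> x - x)"
proof -
  define d where "d = norm (x - closest_point A x)"
  have "0 \<le> r"
    using assms(6) norm_ge_zero order_trans by blast
  then have "0 \<le> (2 - lam) * R"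
    using R by linarith
  then have "0 \<le> R" "R \<le> d"
    using assms(5) far by (simp_all add: d_def zero_le_mult_iff)
  then have "(2 - lam) * R \<le> (2 - \<mu>) * d"
    using assms(4,5) by (intro mult_mono) auto
  then have "(2 - lam) * R / 2 \<le> (2 - \<mu>) * d - 2 * r"
    using R by linarith
  from mult_left_mono[OF this, of "\<mu> * d"]
  have "\<mu> * d * ((2 - lam) * R / 2) \<le> \<mu> * (2 - \<mu>) * d\<^sup>2 - 2 * \<mu> * r * d"
    using assms(3) by (simp add: d_def power2_eq_square algebra_simps)
  moreover have "norm (relaxed_projection A \<mu> x - x) = \<mu> * d"
    using assms(3) by (simp add: norm_relaxed_projection_step d_def)
  ultimately show ?thesis
    using norm_relaxed_projection_sq_le[OF assms(1-3,6), of x] by (simp add: d_def algebra_simps)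
qed

section \<open>The common direction space of a family\<close>

definition common_directions :: "'a::real_vector set set \<Rightarrow> 'a set" where
  "common_directions F = \<Inter> (directions ` F)"

definition perp_norm :: "'a::euclidean_space set set \<Rightarrow> 'a \<Rightarrow> real" where
  "perp_norm F x = norm (x - closest_point (common_directions F) x)"

lemma perp_norm_nonneg [simp]: "0 \<le> perp_norm F x"
  by (simp add: perp_norm_def)

lemma perp_norm_empty [simp]: "perp_norm {} x = 0"
  by (simp add: perp_norm_def common_directions_def closest_point_self)

lemma subspace_common_directions:
  "\<forall>A\<in>F. affine A \<and> A \<noteq> {} \<Longrightarrow> subspace (common_directions F)"
  unfolding common_directions_def by (auto intro!: subspace_Inter subspace_directions)

lemma common_directions_subset: "A \<in> F \<Longrightarrow> common_directions F \<subseteq> directions A"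
  unfolding common_directions_def by blast

lemma perp_norm_sq:
  assumes "\<forall>A\<in>F. affine A \<and> A \<noteq> {}"
  shows "(perp_norm F x)\<^sup>2 = (norm x)\<^sup>2 - (norm (closest_point (common_directions F) x))\<^sup>2"
  using norm_closest_point_subspace_pythagorean[OF subspace_common_directions[OF assms], of x]
  by (simp add: perp_norm_def)

lemma perp_norm_lipschitz:
  assumes "\<forall>A\<in>F. affine A \<and> A \<noteq> {}"
  shows "\<bar>perp_norm F x - perp_norm F y\<bar> \<le> norm (x - y)"
  using norm_triangle_ineq3 residual_subspace_nonexpansive[OF subspace_common_directions[OF assms]]
    order_trans unfolding perp_norm_def by blast

lemma closest_point_common_directions_relaxed_projection:
  assumes "\<forall>A\<in>F. affine A \<and> A \<noteq> {}" "A \<in> F"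
  shows "closest_point (common_directions F) (relaxed_projection A \<mu> x)
           = closest_point (common_directions F) x"
  using assms
  by (intro closest_point_relaxed_projection subspace_common_directions common_directions_subset)
     auto

lemma perp_norm_relaxed_projection:
  assumes "\<forall>A\<in>F. affine A \<and> A \<noteq> {}" "A \<in> F"
  shows "(perp_norm F (relaxed_projection A \<mu> x))\<^sup>2 - (norm (relaxed_projection A \<mu> x))\<^sup>2
           = (perp_norm F x)\<^sup>2 - (norm x)\<^sup>2"
  using perp_norm_sq[OF assms(1)] closest_point_common_directions_relaxed_projection[OF assms]
  by simp

lemma homogeneous_lower_bound:
  fixes h :: "'a::euclidean_space \<Rightarrow> real"
  assumes V: "subspace V" and cont: "continuous_on V h"
    and homog: "\<And>t u. u \<in> V \<Longrightarrow> h (t *\<^sub>R u) = \<bar>t\<bar> * h u"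
    and pos: "\<And>u. u \<in> V \<Longrightarrow> u \<noteq> 0 \<Longrightarrow> 0 < h u"
  shows "\<exists>c>0. \<forall>u\<in>V. c * norm u \<le> h u"
proof -
  define S where "S = sphere 0 1 \<inter> V"
  have normalized: "(1 / norm u) *\<^sub>R u \<in> S" if "u \<in> V" "u \<noteq> 0" for u
    using that V by (simp add: S_def subspace_scale)
  have h_normalized: "h u = norm u * h ((1 / norm u) *\<^sub>R u)" if "u \<in> V" "u \<noteq> 0" for u
    using homog[OF that(1), of "1 / norm u"] that(2) by simp
  have h0: "h 0 = 0"
    using homog[of 0 0] V subspace_0 by fastforce
  show ?thesis
  proof (cases "S = {}")
    case True
    then show ?thesis
      using normalized h0 by (intro exI[of _ 1]) fastforce
  next
    case False
    have "compact S"
      unfolding S_def using V by (intro compact_Int_closed closed_subspace) auto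
    then obtain u0 where u0: "u0 \<in> S" "\<And>u. u \<in> S \<Longrightarrow> h u0 \<le> h u"
      using continuous_attains_inf[OF _ False continuous_on_subset[OF cont]] S_def by blast
    have "u0 \<in> V" "u0 \<noteq> 0"
      using u0(1) by (auto simp: S_def)
    then have "0 < h u0"
      by (rule pos)
    moreover have "h u0 * norm u \<le> h u" if "u \<in> V" for u
    proof (cases "u = 0")
      case False
      then show ?thesis
        using u0(2)[OF normalized[OF that False]] h_normalized[OF that False]
        by (simp add: mult.commute mult_left_mono)
    qed (simp add: h0)
    ultimately show ?thesis
      by blast
  qed
qed

lemma residual_directions_le:
  fixes A :: "'a::euclidean_space set"
  assumes "affine A" "a \<in> A"
  shows "norm (u - closest_point (directions A) u) \<le> norm (u - closest_point A u) + norm a"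
proof -
  have "A \<noteq> {}"
    using assms(2) by blast
  then have "closest_point A u - a \<in> directions A"
    using assms affine_closed closest_point_in_set unfolding directions_def by blast
  then have "dist u (closest_point (directions A) u) \<le> dist u (closest_point A u - a)"
    using closest_point_le closed_subspace subspace_directions[OF assms(1) \<open>A \<noteq> {}\<close>] by blast
  also have "\<dots> \<le> norm (u - closest_point A u) + norm a"
    using norm_triangle_ineq[of "u - closest_point A u" a] by (simp add: dist_norm algebra_simps)
  finally show ?thesis
    by (simp add: dist_norm)
qed

lemma sum_residuals_directions_lower_bound:
  fixes F :: "'a::euclidean_space set set"
  assumes "finite F" and F: "\<forall>A\<in>F. affine A \<and> A \<noteq> {}"
  shows "\<exists>c>0. \<forall>u\<in>(common_directions F)\<^sup>\<bottom>.
           c * norm u \<le> (\<Sum>A\<in>F. norm (u - closest_point (directions A) u))"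
proof (rule homogeneous_lower_bound[OF subspace_orthogonal_comp])
  have D: "subspace (directions A)" if "A \<in> F" for A
    using F that by (simp add: subspace_directions)
  show "continuous_on ((common_directions F)\<^sup>\<bottom>)
          (\<lambda>u. \<Sum>A\<in>F. norm (u - closest_point (directions A) u))"
    by (intro continuous_on_sum continuous_on_norm continuous_on_diff continuous_on_id
        continuous_on_closest_point)
       (use D subspace_0 in \<open>auto simp: subspace_imp_convex closed_subspace\<close>)
  show "(\<Sum>A\<in>F. norm (t *\<^sub>R u - closest_point (directions A) (t *\<^sub>R u)))
          = \<bar>t\<bar> * (\<Sum>A\<in>F. norm (u - closest_point (directions A) u))" for t u
    unfolding sum_distrib_left using D by (intro sum.cong) (simp_all add: residual_subspace_scaleR)
  fix u assume u: "u \<in> (common_directions F)\<^sup>\<bottom>" "u \<noteq> 0"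
  show "0 < (\<Sum>A\<in>F. norm (u - closest_point (directions A) u))"
  proof (rule ccontr)
    assume "\<not> ?thesis"
    then have "norm (u - closest_point (directions A) u) = 0" if "A \<in> F" for A
      using sum_nonneg_eq_0_iff[OF assms(1)] that
      by (metis (no_types, lifting) norm_ge_zero order_antisym_conv not_less sum_nonneg)
    then have "u \<in> directions A" if "A \<in> F" for A
      using closest_point_in_subspace[OF D[OF that], of u] that by simp
    then have "u \<in> common_directions F"
      by (simp add: common_directions_def)
    then show False
      using u by (auto simp: orthogonal_comp_def orthogonal_def)
  qed
qed

lemma perp_norm_error_bound:
  fixes F :: "'a::euclidean_space set set"
  assumes "finite F" and F: "\<forall>A\<in>F. affine A \<and> A \<noteq> {}"
  shows "\<exists>c>0. \<exists>a. \<forall>x. c * perp_norm F x \<le> (\<Sum>A\<in>F. norm (x - closest_point A x)) + a"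
proof -
  define W where "W = common_directions F"
  have W: "subspace W"
    using subspace_common_directions[OF F] by (simp add: W_def)
  have D: "subspace (directions A)" if "A \<in> F" for A
    using F that by (simp add: subspace_directions)
  obtain c where c: "c > 0"
    "\<And>u. u \<in> W\<^sup>\<bottom> \<Longrightarrow> c * norm u \<le> (\<Sum>A\<in>F. norm (u - closest_point (directions A) u))"
    using sum_residuals_directions_lower_bound[OF assms] by (auto simp: W_def)
  define a where "a = (\<Sum>A\<in>F. norm (SOME a. a \<in> A))"
  have "c * perp_norm F x \<le> (\<Sum>A\<in>F. norm (x - closest_point A x)) + a" for x
  proof -
    have "x - closest_point W x \<in> W\<^sup>\<bottom>"
      using closest_point_subspace_orthogonal[OF W]
      by (auto simp: orthogonal_comp_def orthogonal_def inner_commute)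
    from c(2)[OF this] have "c * perp_norm F x
        \<le> (\<Sum>A\<in>F. norm ((x - closest_point W x) - closest_point (directions A) (x - closest_point W x)))"
      by (simp add: perp_norm_def W_def)
    also have "\<dots> = (\<Sum>A\<in>F. norm (x - closest_point (directions A) x))"
    proof -
      have "(x - closest_point W x) - closest_point (directions A) (x - closest_point W x)
              = x - closest_point (directions A) x" if "A \<in> F" for A
        using closest_point_in_subspace[OF W] common_directions_subset[OF that] W_def
        by (intro residual_subspace_diff_mem[OF D[OF that]]) blast
      then show ?thesis
        by (auto simp only: intro!: sum.cong)
    qed
    also have "\<dots> \<le> (\<Sum>A\<in>F. norm (x - closest_point A x) + norm (SOME a. a \<in> A))"
      using F by (intro sum_mono residual_directions_le) (auto simp: some_in_eq)
    finally show ?thesis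
      by (simp add: sum.distrib a_def)
  qed
  then show ?thesis
    using c(1) by blast
qed

lemma perp_norm_bounded_if_near:
  fixes F :: "'a::euclidean_space set set"
  assumes "finite F" "\<forall>A\<in>F. affine A \<and> A \<noteq> {}"
  shows "\<exists>\<rho>. \<forall>x. (\<forall>A\<in>F. norm (x - closest_point A x) \<le> T) \<longrightarrow> perp_norm F x \<le> \<rho>"
proof -
  obtain c a where c: "0 < c" "\<And>x. c * perp_norm F x \<le> (\<Sum>A\<in>F. norm (x - closest_point A x)) + a"
    using perp_norm_error_bound[OF assms] by blast
  have "perp_norm F x \<le> (real (card F) * T + a) / c"
    if "\<forall>A\<in>F. norm (x - closest_point A x) \<le> T" for x
  proof -
    have "(\<Sum>A\<in>F. norm (x - closest_point A x)) \<le> real (card F) * T"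
      using that by (intro sum_bounded_above) blast
    then have "c * perp_norm F x \<le> real (card F) * T + a"
      using c(2)[of x] by linarith
    then show ?thesis
      using c(1) by (simp add: pos_le_divide_eq mult.commute)
  qed
  then show ?thesis
    by blast
qed

lemma sq_diff_le_bound:
  fixes a b B :: real
  assumes "0 \<le> a" "0 \<le> b" "a \<le> B" "b \<le> B"
  shows "a\<^sup>2 - b\<^sup>2 \<le> 2 * B * \<bar>a - b\<bar>"
proof -
  have "a\<^sup>2 - b\<^sup>2 = (a + b) * (a - b)"
    by (simp add: power2_eq_square algebra_simps)
  also have "\<dots> \<le> (a + b) * \<bar>a - b\<bar>"
    using assms by (intro mult_left_mono) auto
  also have "\<dots> \<le> 2 * B * \<bar>a - b\<bar>"
    using assms by (intro mult_right_mono) auto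
  finally show ?thesis .
qed

section \<open>Orbits of finite families of affine sets\<close>

definition relaxation_orbit :: "'a::euclidean_space set set \<Rightarrow> real \<Rightarrow> (nat \<Rightarrow> 'a) \<Rightarrow> bool" where
  "relaxation_orbit F lam x \<longleftrightarrow>
     (\<forall>n. \<exists>A\<in>F. \<exists>\<mu>\<in>{0..lam}. x (Suc n) = relaxed_projection A \<mu> (x n))"

lemma relaxation_orbit_shift:
  "relaxation_orbit F lam x \<Longrightarrow> relaxation_orbit F lam (\<lambda>n. x (n + k))"
  unfolding relaxation_orbit_def by (metis add_Suc)

lemma relaxation_orbitE:
  assumes "relaxation_orbit F lam x"
  obtains As \<mu>s where "\<And>n. As n \<in> F" "\<And>n. \<mu>s n \<in> {0..lam}"
    "\<And>n. x (Suc n) = relaxed_projection (As n) (\<mu>s n) (x n)"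
  using assms unfolding relaxation_orbit_def by metis

locale relaxation_phase =
  fixes F J :: "'a::euclidean_space set set" and lam r \<theta> B R :: real
    and x :: "nat \<Rightarrow> 'a" and As :: "nat \<Rightarrow> 'a set" and \<mu>s :: "nat \<Rightarrow> real"
  assumes affine_sets: "\<forall>A\<in>F. affine A \<and> A \<noteq> {}" and subfamily: "J \<subseteq> F"
    and lam: "0 \<le> lam" "lam < 2"
    and r: "\<forall>A\<in>F. norm (closest_point A 0) \<le> r"
    and B: "1 \<le> B" and R: "2 * r + 2 * B + 2 * B\<^sup>2 \<le> (2 - lam) * R / 2"
    and J_bound: "\<And>y k. relaxation_orbit J lam y \<Longrightarrow>
       \<forall>A\<in>J. norm (y 0 - closest_point A (y 0)) \<le> \<theta> \<Longrightarrow> perp_norm J (y k) \<le> B - 1"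
    and As: "\<And>n. As n \<in> F" and \<mu>s: "\<And>n. \<mu>s n \<in> {0..lam}"
    and orbit: "\<And>n. x (Suc n) = relaxed_projection (As n) (\<mu>s n) (x n)"
    and near: "\<forall>A\<in>J. norm (x 0 - closest_point A (x 0)) \<le> \<theta>"
    and far: "\<forall>A\<in>F - J. R + 2 * B \<le> norm (x 0 - closest_point A (x 0))"
begin

lemma affine_subfamily: "\<forall>A\<in>J. affine A \<and> A \<noteq> {}"
  using affine_sets subfamily by blast

lemma r_nonneg: "0 \<le> r"
  using r As[of 0] norm_ge_zero order_trans by blast

definition gain :: real where
  "gain = (2 - lam) * R / 2 - 2 * B"

lemma gain_ge: "2 * B\<^sup>2 \<le> gain"
  using R r_nonneg by (simp add: gain_def)

definition far_travel :: "nat \<Rightarrow> real" where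
  "far_travel k = (\<Sum>i<k. if As i \<in> J then 0 else norm (x (Suc i) - x i))"

lemma far_travel_0 [simp]: "far_travel 0 = 0"
  by (simp add: far_travel_def)

lemma far_travel_Suc:
  "far_travel (Suc k) = far_travel k + (if As k \<in> J then 0 else norm (x (Suc k) - x k))"
  by (simp add: far_travel_def)

lemma far_travel_mono: "far_travel k \<le> far_travel (Suc k)"
  by (simp add: far_travel_Suc)

lemma far_travel_nonneg: "0 \<le> far_travel k"
  by (simp add: far_travel_def sum_nonneg)

text \<open>Being an orbit of \<open>J\<close> (up to idle steps), the shadow stays near \<open>x 0\<close>; by
  nonexpansiveness it stays within \<open>far_travel\<close> of \<open>x\<close>.\<close>

primrec shadow :: "nat \<Rightarrow> 'a" where
  "shadow 0 = x 0"
| "shadow (Suc n) = (if As n \<in> J then relaxed_projection (As n) (\<mu>s n) (shadow n) else shadow n)"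

lemma dist_shadow_le: "norm (x k - shadow k) \<le> far_travel k"
proof (induction k)
  case (Suc k)
  show ?case
  proof (cases "As k \<in> J")
    case True
    have "\<mu>s k \<le> 2"
      using \<mu>s[of k] lam(2) by simp
    then have "norm (x (Suc k) - shadow (Suc k)) \<le> norm (x k - shadow k)"
      using True orbit affine_sets As \<mu>s[of k] by (simp add: relaxed_projection_nonexpansive)
    then show ?thesis
      using Suc.IH far_travel_mono[of k] by linarith
  next
    case False
    have "norm (x (Suc k) - shadow (Suc k)) \<le> norm (x (Suc k) - x k) + norm (x k - shadow k)"
      using False norm_triangle_ineq[of "x (Suc k) - x k" "x k - shadow k"] by simp
    then show ?thesis
      using Suc.IH False by (simp add: far_travel_Suc)
  qed
qed simp

lemma perp_norm_shadow_le: "perp_norm J (shadow k) \<le> B - 1"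
proof (cases "J = {}")
  case False
  then obtain A0 where "A0 \<in> J"
    by blast
  have "relaxation_orbit J lam shadow"
    unfolding relaxation_orbit_def
  proof
    fix n
    show "\<exists>A\<in>J. \<exists>\<mu>\<in>{0..lam}. shadow (Suc n) = relaxed_projection A \<mu> (shadow n)"
    proof (cases "As n \<in> J")
      case True
      then show ?thesis
        using \<mu>s[of n] by (intro bexI[of _ "As n"] bexI[of _ "\<mu>s n"]) auto
    next
      case False
      then show ?thesis
        using \<open>A0 \<in> J\<close> lam(1) by (intro bexI[of _ A0] bexI[of _ 0]) auto
    qed
  qed
  then show ?thesis
    using J_bound near by simp
qed (use B in simp)

lemma closest_point_shadow:
  "closest_point (common_directions J) (shadow k) = closest_point (common_directions J) (x 0)"
  by (induction k) (simp_all add: closest_point_common_directions_relaxed_projection[OF affine_subfamily])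

lemma dist_shadow_start: "norm (shadow k - x 0) \<le> 2 * B - 2"
proof -
  let ?P = "closest_point (common_directions J)"
  have "shadow k - x 0 = (shadow k - ?P (shadow k)) - (shadow 0 - ?P (shadow 0))"
    using closest_point_shadow[of k] closest_point_shadow[of 0] by simp
  then have "norm (shadow k - x 0) \<le> perp_norm J (shadow k) + perp_norm J (shadow 0)"
    unfolding perp_norm_def by (metis norm_triangle_ineq4)
  then show ?thesis
    using perp_norm_shadow_le[of k] perp_norm_shadow_le[of 0] by linarith
qed

lemma dist_start_le: "far_travel k \<le> 1 \<Longrightarrow> norm (x k - x 0) \<le> 2 * B - 1"
  using norm_triangle_ineq[of "x k - shadow k" "shadow k - x 0"] dist_shadow_le[of k]
    dist_shadow_start[of k]
  by simp

lemma far_sets_stay_far: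
  assumes "far_travel k \<le> 1" "A \<in> F - J"
  shows "R \<le> norm (x k - closest_point A (x k))"
proof -
  have "closed A" "A \<noteq> {}"
    using affine_sets assms(2) affine_closed by auto
  then have "norm (x 0 - closest_point A (x 0)) \<le> norm (x 0 - x k) + norm (x k - closest_point A (x k))"
    by (rule dist_closest_point_triangle)
  moreover have "R + 2 * B \<le> norm (x 0 - closest_point A (x 0))"
    using far assms(2) by blast
  ultimately show ?thesis
    using dist_start_le[OF assms(1)] by (simp add: norm_minus_commute)
qed

lemma perp_norm_subfamily_le: "far_travel k \<le> 1 \<Longrightarrow> perp_norm J (x k) \<le> B"
  using perp_norm_lipschitz[OF affine_subfamily, of "x k" "shadow k"] dist_shadow_le[of k]
    perp_norm_shadow_le[of k]
  by linarith

lemma perp_norm_far_step: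
  assumes "far_travel k \<le> 1" "As k \<notin> J"
  shows "(perp_norm F (x (Suc k)))\<^sup>2
           \<le> (perp_norm F (x k))\<^sup>2 - (2 - lam) * R / 2 * norm (x (Suc k) - x k)"
proof -
  have "2 * r \<le> (2 - lam) * R / 2"
    using R B r_nonneg by (smt (verit) zero_le_power2)
  then have "(norm (x (Suc k)))\<^sup>2 \<le> (norm (x k))\<^sup>2 - (2 - lam) * R / 2 * norm (x (Suc k) - x k)"
    using norm_relaxed_projection_sq_le_far[of "As k" "\<mu>s k" lam r R "x k"] affine_sets As \<mu>s[of k]
      lam(2) r far_sets_stay_far[OF assms(1), of "As k"] assms(2)
    by (simp add: orbit)
  then show ?thesis
    using perp_norm_relaxed_projection[OF affine_sets As, of k "\<mu>s k" "x k"] by (simp add: orbit)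
qed

text \<open>A step towards a set of \<open>J\<close> changes both squared distances to the common direction
  spaces by the same amount, so only the far steps move the potential.\<close>

definition potential :: "nat \<Rightarrow> real" where
  "potential k = (perp_norm F (x k))\<^sup>2 - (perp_norm J (x k))\<^sup>2"

lemma potential_decrease:
  "far_travel k \<le> 1 \<Longrightarrow> potential k \<le> potential 0 - far_travel k * gain"
proof (induction k)
  case (Suc k)
  have near_k: "far_travel k \<le> 1"
    using Suc.prems far_travel_mono[of k] by linarith
  show ?case
  proof (cases "As k \<in> J")
    case True
    have "potential (Suc k) = potential k"
      using perp_norm_relaxed_projection[OF affine_sets As, of k "\<mu>s k" "x k"]
        perp_norm_relaxed_projection[OF affine_subfamily True, of "\<mu>s k" "x k"]
      by (simp add: potential_def orbit)
    then show ?thesis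
      using Suc.IH[OF near_k] True by (simp add: far_travel_Suc)
  next
    case False
    define step where "step = norm (x (Suc k) - x k)"
    have "\<bar>perp_norm J (x k) - perp_norm J (x (Suc k))\<bar> \<le> step"
      using perp_norm_lipschitz[OF affine_subfamily] by (simp add: step_def norm_minus_commute)
    then have "2 * B * \<bar>perp_norm J (x k) - perp_norm J (x (Suc k))\<bar> \<le> 2 * B * step"
      using B by (intro mult_left_mono) auto
    then have "(perp_norm J (x k))\<^sup>2 - (perp_norm J (x (Suc k)))\<^sup>2 \<le> 2 * B * step"
      using sq_diff_le_bound[OF perp_norm_nonneg perp_norm_nonneg perp_norm_subfamily_le[OF near_k]
          perp_norm_subfamily_le[OF Suc.prems]]
      by linarith
    then have "potential (Suc k) \<le> potential k - step * gain"
      using perp_norm_far_step[OF near_k False]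
      by (simp add: potential_def step_def gain_def algebra_simps)
    moreover have "far_travel (Suc k) * gain = far_travel k * gain + step * gain"
      using False by (simp add: far_travel_Suc step_def distrib_right)
    ultimately show ?thesis
      using Suc.IH[OF near_k] by linarith
  qed
qed simp

lemma perp_norm_sq_while_near:
  assumes "far_travel k \<le> 1"
  shows "(perp_norm F (x k))\<^sup>2 \<le> (perp_norm F (x 0))\<^sup>2 + B\<^sup>2 - far_travel k * gain"
proof -
  have "(perp_norm J (x k))\<^sup>2 \<le> B\<^sup>2"
    using perp_norm_subfamily_le[OF assms] by (simp add: power_mono)
  then show ?thesis
    using potential_decrease[OF assms] zero_le_power2[of "perp_norm J (x 0)"]
    unfolding potential_def by linarith
qed

lemma perp_norm_on_exit:
  assumes "far_travel k \<le> 1" "1 < far_travel (Suc k)"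
  shows "(perp_norm F (x (Suc k)))\<^sup>2 \<le> (perp_norm F (x 0))\<^sup>2 - B\<^sup>2"
proof -
  define step where "step = norm (x (Suc k) - x k)"
  have "As k \<notin> J"
    using assms by (auto simp: far_travel_Suc)
  then have far_Suc: "far_travel (Suc k) * gain = far_travel k * gain + step * gain"
    by (simp add: far_travel_Suc step_def distrib_right)
  have "step * gain \<le> step * ((2 - lam) * R / 2)"
    using B by (intro mult_left_mono) (auto simp: gain_def step_def)
  then have "(perp_norm F (x (Suc k)))\<^sup>2 \<le> (perp_norm F (x k))\<^sup>2 - step * gain"
    using perp_norm_far_step[OF assms(1) \<open>As k \<notin> J\<close>] by (simp add: step_def mult.commute)
  also have "\<dots> \<le> (perp_norm F (x 0))\<^sup>2 + B\<^sup>2 - far_travel (Suc k) * gain"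
    using perp_norm_sq_while_near[OF assms(1)] far_Suc by linarith
  also have "\<dots> \<le> (perp_norm F (x 0))\<^sup>2 + B\<^sup>2 - gain"
    using assms(2) gain_ge mult_right_mono[of 1 "far_travel (Suc k)" gain] zero_le_power2[of B]
    by linarith
  also have "\<dots> \<le> (perp_norm F (x 0))\<^sup>2 - B\<^sup>2"
    using gain_ge by simp
  finally show ?thesis .
qed

lemma perp_norm_phase:
  "(perp_norm F (x k))\<^sup>2 \<le> (perp_norm F (x 0))\<^sup>2 + B\<^sup>2
   \<or> (\<exists>e. 0 < e \<and> e \<le> k \<and> (perp_norm F (x e))\<^sup>2 \<le> (perp_norm F (x 0))\<^sup>2)"
proof (cases "far_travel k \<le> 1")
  case True
  have "0 \<le> far_travel k * gain"
    using far_travel_nonneg gain_ge zero_le_power2[of B] by (smt (verit) mult_nonneg_nonneg)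
  then show ?thesis
    using perp_norm_sq_while_near[OF True] by linarith
next
  case False
  define e where "e = (LEAST e. 1 < far_travel e)"
  have exit: "1 < far_travel e" and "e \<le> k"
    using False LeastI[of "\<lambda>e. 1 < far_travel e" k] Least_le[of "\<lambda>e. 1 < far_travel e" k]
    by (simp_all add: e_def)
  moreover have "e \<noteq> 0"
    using exit by (intro notI) simp
  then obtain e' where e': "e = Suc e'"
    using not0_implies_Suc by blast
  then have "far_travel e' \<le> 1"
    using not_less_Least[of e' "\<lambda>e. 1 < far_travel e"] by (simp add: e_def)
  then have "(perp_norm F (x e))\<^sup>2 \<le> (perp_norm F (x 0))\<^sup>2"
    using perp_norm_on_exit[of e'] exit e' by (smt (verit) zero_le_power2)
  ultimately show ?thesis
    using \<open>e \<noteq> 0\<close> by blast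
qed

end

lemma exists_gap:
  fixes d :: "'b \<Rightarrow> real" and th :: "nat \<Rightarrow> real"
  assumes "finite F" "mono th"
  shows "\<exists>i\<le>card F. \<forall>A\<in>F. d A < th i \<or> th (Suc i) \<le> d A"
proof (rule ccontr)
  assume "\<not> ?thesis"
  then have hit: "\<forall>i\<le>card F. \<exists>A\<in>F. th i \<le> d A \<and> d A < th (Suc i)"
    by (meson not_le not_less)
  define idx where "idx A = (LEAST i. d A < th (Suc i))" for A
  have idx: "idx A = i" if "th i \<le> d A" "d A < th (Suc i)" for A i
    unfolding idx_def
  proof (rule Least_equality)
    show "i \<le> j" if "d A < th (Suc j)" for j
    proof (rule ccontr)
      assume "\<not> i \<le> j"
      then have "th (Suc j) \<le> th i"
        using assms(2) by (simp add: monoD)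
      then show False
        using that \<open>th i \<le> d A\<close> by simp
    qed
  qed (use that in simp)
  have "{..card F} \<subseteq> idx ` F"
    using hit idx by (fastforce simp: image_iff)
  then have "card {..card F} \<le> card F"
    using card_mono[OF finite_imageI[OF assms(1)]] card_image_le[OF assms(1), of idx] by fastforce
  then show False
    by simp
qed

lemma bound_by_returns:
  fixes f :: "nat \<Rightarrow> real"
  assumes returns: "\<And>e k. f (e + k) \<le> max (f e) \<Gamma> + D
                     \<or> (\<exists>j. 0 < j \<and> j \<le> k \<and> f (e + j) \<le> max (f e) \<Gamma>)"
  shows "f k \<le> max (f 0) \<Gamma> + D"
proof -
  have "f (e + k) \<le> max (f e) \<Gamma> + D" for e
  proof (induction k arbitrary: e rule: less_induct)
    case (less k)
    from returns[of e k] show ?case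
    proof
      assume "\<exists>j. 0 < j \<and> j \<le> k \<and> f (e + j) \<le> max (f e) \<Gamma>"
      then obtain j where j: "0 < j" "j \<le> k" "f (e + j) \<le> max (f e) \<Gamma>"
        by blast
      then have "f (e + j + (k - j)) \<le> max (f (e + j)) \<Gamma> + D"
        using less.IH[of "k - j" "e + j"] by simp
      moreover have "max (f (e + j)) \<Gamma> \<le> max (f e) \<Gamma>"
        using j(3) by simp
      ultimately show ?thesis
        using j(2) by simp
    qed
  qed
  from this[of 0] show ?thesis
    by simp
qed

definition bounded_perp_drift :: "'a::euclidean_space set set \<Rightarrow> real \<Rightarrow> bool" where
  "bounded_perp_drift F lam \<longleftrightarrow>
     (\<exists>M. \<forall>x n. relaxation_orbit F lam x \<longrightarrow> perp_norm F (x n) \<le> perp_norm F (x 0) + M)"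

lemma eventually_perp_norm_le_near:
  fixes J :: "'a::euclidean_space set set"
  assumes "finite J" "\<forall>A\<in>J. affine A \<and> A \<noteq> {}" "bounded_perp_drift J lam"
  shows "\<forall>\<^sub>F B in at_top. \<forall>y k. relaxation_orbit J lam y \<longrightarrow>
           (\<forall>A\<in>J. norm (y 0 - closest_point A (y 0)) \<le> \<theta>) \<longrightarrow> perp_norm J (y k) \<le> B"
proof -
  obtain M where M: "\<And>y k. relaxation_orbit J lam y \<Longrightarrow> perp_norm J (y k) \<le> perp_norm J (y 0) + M"
    using assms(3) unfolding bounded_perp_drift_def by blast
  obtain \<rho> where \<rho>: "\<And>x. \<forall>A\<in>J. norm (x - closest_point A x) \<le> \<theta> \<Longrightarrow> perp_norm J x \<le> \<rho>"
    using perp_norm_bounded_if_near[OF assms(1,2), of \<theta>] by blast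
  have "perp_norm J (y k) \<le> \<rho> + M"
    if "relaxation_orbit J lam y" "\<forall>A\<in>J. norm (y 0 - closest_point A (y 0)) \<le> \<theta>" for y k
    using M[OF that(1), of k] \<rho>[OF that(2)] by linarith
  then show ?thesis
    unfolding eventually_at_top_linorder by (meson order_trans)
qed

lemma uniform_perp_norm_bound_near:
  fixes F :: "'a::euclidean_space set set"
  assumes "finite F" "\<forall>A\<in>F. affine A \<and> A \<noteq> {}" "\<And>J. J \<subset> F \<Longrightarrow> bounded_perp_drift J lam"
  obtains Bf where "\<And>\<theta>. 1 \<le> Bf \<theta>"
    "\<And>\<theta> J y k. J \<subset> F \<Longrightarrow> relaxation_orbit J lam y \<Longrightarrow>
       \<forall>A\<in>J. norm (y 0 - closest_point A (y 0)) \<le> \<theta> \<Longrightarrow> perp_norm J (y k) \<le> Bf \<theta> - 1"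
proof -
  have "\<exists>B. 1 \<le> B \<and> (\<forall>J y k. J \<subset> F \<longrightarrow> relaxation_orbit J lam y \<longrightarrow>
          (\<forall>A\<in>J. norm (y 0 - closest_point A (y 0)) \<le> \<theta>) \<longrightarrow> perp_norm J (y k) \<le> B - 1)" for \<theta>
  proof -
    have "finite {J. J \<subset> F}"
      using assms(1) by (auto intro: finite_subset[of _ "Pow F"])
    then have "\<forall>\<^sub>F B in at_top. \<forall>J\<in>{J. J \<subset> F}. \<forall>y k. relaxation_orbit J lam y \<longrightarrow>
           (\<forall>A\<in>J. norm (y 0 - closest_point A (y 0)) \<le> \<theta>) \<longrightarrow> perp_norm J (y k) \<le> B"
      using assms by (intro eventually_ball_finite ballI eventually_perp_norm_le_near)
        (auto intro: finite_subset)
    then obtain N where "\<forall>B\<ge>N. \<forall>J\<in>{J. J \<subset> F}. \<forall>y k. relaxation_orbit J lam y \<longrightarrow>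
           (\<forall>A\<in>J. norm (y 0 - closest_point A (y 0)) \<le> \<theta>) \<longrightarrow> perp_norm J (y k) \<le> B"
      unfolding eventually_at_top_linorder by blast
    then show ?thesis
      by (intro exI[of _ "max N 0 + 1"]) auto
  qed
  then show ?thesis
    using that by metis
qed

lemma perp_norm_phase_exists:
  fixes F :: "'a::euclidean_space set set"
  assumes "finite F" and F: "\<forall>A\<in>F. affine A \<and> A \<noteq> {}" and lam: "0 \<le> lam" "lam < 2"
    and r: "\<forall>A\<in>F. norm (closest_point A 0) \<le> r"
    and Bf: "\<And>\<theta>. 1 \<le> Bf \<theta>"
      "\<And>\<theta> J y k. J \<subset> F \<Longrightarrow> relaxation_orbit J lam y \<Longrightarrow>
         \<forall>A\<in>J. norm (y 0 - closest_point A (y 0)) \<le> \<theta> \<Longrightarrow> perp_norm J (y k) \<le> Bf \<theta> - 1"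
    and Rf: "\<And>\<theta>. 2 * r + 2 * Bf \<theta> + 2 * (Bf \<theta>)\<^sup>2 \<le> (2 - lam) * Rf \<theta> / 2"
    and th: "mono th" "\<And>i. 0 \<le> th i" "\<And>i. th i + Rf (th i) + 2 * Bf (th i) \<le> th (Suc i)"
    and x: "relaxation_orbit F lam x"
    and far: "\<exists>A\<in>F. th (card F) \<le> norm (x 0 - closest_point A (x 0))"
  shows "\<exists>i\<le>card F. \<forall>k. (perp_norm F (x k))\<^sup>2 \<le> (perp_norm F (x 0))\<^sup>2 + (Bf (th i))\<^sup>2
           \<or> (\<exists>e. 0 < e \<and> e \<le> k \<and> (perp_norm F (x e))\<^sup>2 \<le> (perp_norm F (x 0))\<^sup>2)"
proof -
  define d where "d A = norm (x 0 - closest_point A (x 0))" for A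
  obtain i where i: "i \<le> card F" "\<forall>A\<in>F. d A < th i \<or> th (Suc i) \<le> d A"
    using exists_gap[OF assms(1) th(1)] by blast
  \<comment> \<open>The sets not in \<open>J\<close> lie beyond the gap, far enough for the phase argument.\<close>
  define J where "J = {A\<in>F. d A < th i}"
  have "J \<subset> F"
  proof -
    obtain A where "A \<in> F" "th (card F) \<le> d A"
      using far by (auto simp: d_def)
    moreover have "th i \<le> th (card F)"
      using th(1) i(1) by (simp add: monoD)
    ultimately show ?thesis
      by (force simp: J_def)
  qed
  have far_J: "Rf (th i) + 2 * Bf (th i) \<le> d A" if "A \<in> F - J" for A
    using i(2) that th(2,3)[of i] by (force simp: J_def)
  obtain As \<mu>s where "\<And>n. As n \<in> F" "\<And>n. \<mu>s n \<in> {0..lam}"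
    "\<And>n. x (Suc n) = relaxed_projection (As n) (\<mu>s n) (x n)"
    using relaxation_orbitE[OF x] by blast
  then interpret relaxation_phase F J lam r "th i" "Bf (th i)" "Rf (th i)" x As \<mu>s
    using F \<open>J \<subset> F\<close> lam r Bf(1) Rf Bf(2)[OF \<open>J \<subset> F\<close>] far_J
    by unfold_locales (auto simp: J_def d_def)
  show ?thesis
    using perp_norm_phase i(1) by blast
qed

lemma exists_thresholds:
  fixes g :: "real \<Rightarrow> real"
  assumes "\<And>\<theta>. 0 \<le> g \<theta>"
  shows "\<exists>th. mono th \<and> (\<forall>i. 0 \<le> th i) \<and> (\<forall>i. th i + g (th i) \<le> th (Suc i))"
proof (intro exI conjI allI)
  define th where "th i = ((\<lambda>\<theta>. \<theta> + g \<theta>) ^^ i) 0" for i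
  show th_Suc: "th i + g (th i) \<le> th (Suc i)" for i
    by (simp add: th_def)
  show "mono th"
    using assms th_Suc by (intro incseq_SucI) (smt (verit))
  then show "0 \<le> th i" for i
    using monoD[of th 0 i] by (simp add: th_def)
qed

lemma exists_return_threshold:
  fixes F :: "'a::euclidean_space set set"
  assumes "finite F" and F: "\<forall>A\<in>F. affine A \<and> A \<noteq> {}" and lam: "0 \<le> lam" "lam < 2"
    and r: "\<forall>A\<in>F. norm (closest_point A 0) \<le> r" "0 \<le> r"
    and IH: "\<And>J. J \<subset> F \<Longrightarrow> bounded_perp_drift J lam"
  shows "\<exists>D T. 0 \<le> D \<and> (\<forall>x k. relaxation_orbit F lam x \<longrightarrow>
           (\<exists>A\<in>F. T \<le> norm (x 0 - closest_point A (x 0))) \<longrightarrow>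
           (perp_norm F (x k))\<^sup>2 \<le> (perp_norm F (x 0))\<^sup>2 + D
           \<or> (\<exists>e. 0 < e \<and> e \<le> k \<and> (perp_norm F (x e))\<^sup>2 \<le> (perp_norm F (x 0))\<^sup>2))"
proof -
  obtain Bf where Bf: "\<And>\<theta>. 1 \<le> Bf \<theta>"
    "\<And>\<theta> J y k. J \<subset> F \<Longrightarrow> relaxation_orbit J lam y \<Longrightarrow>
       \<forall>A\<in>J. norm (y 0 - closest_point A (y 0)) \<le> \<theta> \<Longrightarrow> perp_norm J (y k) \<le> Bf \<theta> - 1"
    using uniform_perp_norm_bound_near[OF assms(1) F IH] by blast
  define Rf where "Rf \<theta> = 4 * (r + Bf \<theta> + (Bf \<theta>)\<^sup>2) / (2 - lam)" for \<theta>
  have Rf: "2 * r + 2 * Bf \<theta> + 2 * (Bf \<theta>)\<^sup>2 \<le> (2 - lam) * Rf \<theta> / 2" for \<theta>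
    using lam(2) by (simp add: Rf_def)
  have "0 \<le> Rf \<theta> + 2 * Bf \<theta>" for \<theta>
    using r(2) Bf(1)[of \<theta>] lam(2) by (simp add: Rf_def add_nonneg_nonneg)
  then obtain th where th: "mono th" "\<And>i. 0 \<le> th i"
    "\<And>i. th i + (Rf (th i) + 2 * Bf (th i)) \<le> th (Suc i)"
    using exists_thresholds[of "\<lambda>\<theta>. Rf \<theta> + 2 * Bf \<theta>"] by blast
  define D where "D = (\<Sum>i\<le>card F. (Bf (th i))\<^sup>2)"
  have D: "(Bf (th i))\<^sup>2 \<le> D" if "i \<le> card F" for i
    unfolding D_def using that by (intro member_le_sum) auto
  have "(perp_norm F (x k))\<^sup>2 \<le> (perp_norm F (x 0))\<^sup>2 + D
       \<or> (\<exists>e. 0 < e \<and> e \<le> k \<and> (perp_norm F (x e))\<^sup>2 \<le> (perp_norm F (x 0))\<^sup>2)"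
    if x: "relaxation_orbit F lam x"
      and far: "\<exists>A\<in>F. th (card F) \<le> norm (x 0 - closest_point A (x 0))" for x k
  proof -
    have "\<exists>i\<le>card F. \<forall>k. (perp_norm F (x k))\<^sup>2 \<le> (perp_norm F (x 0))\<^sup>2 + (Bf (th i))\<^sup>2
         \<or> (\<exists>e. 0 < e \<and> e \<le> k \<and> (perp_norm F (x e))\<^sup>2 \<le> (perp_norm F (x 0))\<^sup>2)"
      by (rule perp_norm_phase_exists[where Bf = Bf and Rf = Rf])
        (use assms(1) F lam r(1) Bf Rf th x far in \<open>auto simp: add.assoc\<close>)
    then obtain i where "i \<le> card F" and phase:
      "\<And>k. (perp_norm F (x k))\<^sup>2 \<le> (perp_norm F (x 0))\<^sup>2 + (Bf (th i))\<^sup>2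
         \<or> (\<exists>e. 0 < e \<and> e \<le> k \<and> (perp_norm F (x e))\<^sup>2 \<le> (perp_norm F (x 0))\<^sup>2)"
      by blast
    then show ?thesis
      using D[OF \<open>i \<le> card F\<close>] phase[of k] by (meson add_left_mono order_trans)
  qed
  moreover have "0 \<le> D"
    by (simp add: D_def sum_nonneg)
  ultimately show ?thesis
    by blast
qed

lemma perp_norm_orbit_Suc_sq_le:
  assumes "\<forall>A\<in>F. affine A \<and> A \<noteq> {}" "lam < 2" "\<forall>A\<in>F. norm (closest_point A 0) \<le> r"
    and "relaxation_orbit F lam x"
  shows "(perp_norm F (x (Suc n)))\<^sup>2 \<le> (perp_norm F (x n))\<^sup>2 + 2 * r\<^sup>2 / (2 - lam)"
proof -
  obtain A \<mu> where A: "A \<in> F" "\<mu> \<in> {0..lam}" "x (Suc n) = relaxed_projection A \<mu> (x n)"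
    using assms(4) unfolding relaxation_orbit_def by blast
  then show ?thesis
    using norm_relaxed_projection_sq_le_add[of A \<mu> lam r "x n"]
      perp_norm_relaxed_projection[OF assms(1) A(1), of \<mu> "x n"] assms(1-3)
    by auto
qed

lemma relaxation_orbit_returns:
  fixes F :: "'a::euclidean_space set set"
  assumes "finite F" and F: "\<forall>A\<in>F. affine A \<and> A \<noteq> {}" and lam: "0 \<le> lam" "lam < 2"
    and IH: "\<And>J. J \<subset> F \<Longrightarrow> bounded_perp_drift J lam"
  shows "\<exists>\<Gamma> D. 0 \<le> \<Gamma> \<and> 0 \<le> D \<and> (\<forall>x k. relaxation_orbit F lam x \<longrightarrow>
           (perp_norm F (x k))\<^sup>2 \<le> max ((perp_norm F (x 0))\<^sup>2) \<Gamma> + D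
           \<or> (\<exists>e. 0 < e \<and> e \<le> k \<and> (perp_norm F (x e))\<^sup>2 \<le> max ((perp_norm F (x 0))\<^sup>2) \<Gamma>))"
proof -
  define r where "r = (\<Sum>A\<in>F. norm (closest_point A 0))"
  have r: "\<forall>A\<in>F. norm (closest_point A 0) \<le> r" "0 \<le> r"
    unfolding r_def using assms(1) by (auto intro!: member_le_sum simp: sum_nonneg)
  obtain D T where D: "0 \<le> D" and far_returns:
    "\<forall>x k. relaxation_orbit F lam x \<longrightarrow> (\<exists>A\<in>F. T \<le> norm (x 0 - closest_point A (x 0))) \<longrightarrow>
       (perp_norm F (x k))\<^sup>2 \<le> (perp_norm F (x 0))\<^sup>2 + D
       \<or> (\<exists>e. 0 < e \<and> e \<le> k \<and> (perp_norm F (x e))\<^sup>2 \<le> (perp_norm F (x 0))\<^sup>2)"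
    using exists_return_threshold[OF assms(1) F lam r IH] by blast
  obtain \<rho> where \<rho>: "\<And>x. \<forall>A\<in>F. norm (x - closest_point A x) \<le> T \<Longrightarrow> perp_norm F x \<le> \<rho>"
    using perp_norm_bounded_if_near[OF assms(1) F, of T] by blast
  define \<Gamma> where "\<Gamma> = \<rho>\<^sup>2 + 2 * r\<^sup>2 / (2 - lam)"
  have "(perp_norm F (x k))\<^sup>2 \<le> max ((perp_norm F (x 0))\<^sup>2) \<Gamma> + D
      \<or> (\<exists>e. 0 < e \<and> e \<le> k \<and> (perp_norm F (x e))\<^sup>2 \<le> max ((perp_norm F (x 0))\<^sup>2) \<Gamma>)"
    if x: "relaxation_orbit F lam x" for x k
  proof (cases "\<exists>A\<in>F. T \<le> norm (x 0 - closest_point A (x 0))")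
    case True
    have "(perp_norm F (x 0))\<^sup>2 \<le> max ((perp_norm F (x 0))\<^sup>2) \<Gamma>"
      by simp
    then show ?thesis
      using far_returns[rule_format, OF x True, of k] by (meson add_right_mono order_trans)
  next
    case False
    then have "perp_norm F (x 0) \<le> \<rho>"
      by (intro \<rho>) (force simp: not_le)
    then have "(perp_norm F (x 0))\<^sup>2 \<le> \<rho>\<^sup>2"
      by (rule power_mono) simp
    then have "(perp_norm F (x (Suc 0)))\<^sup>2 \<le> \<Gamma>"
      using perp_norm_orbit_Suc_sq_le[OF F lam(2) r(1) x, of 0] by (simp add: \<Gamma>_def)
    then show ?thesis
      using D by (cases k) (auto intro!: exI[of _ 1])
  qed
  moreover have "0 \<le> \<Gamma>"
    using lam(2) by (simp add: \<Gamma>_def)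
  ultimately show ?thesis
    using D by blast
qed

lemma le_add_sqrt_if_sq_le:
  fixes a b c :: real
  assumes "a\<^sup>2 \<le> b\<^sup>2 + c" "0 \<le> b" "0 \<le> c"
  shows "a \<le> b + sqrt c"
proof (rule power2_le_imp_le)
  have "b\<^sup>2 + c \<le> b\<^sup>2 + c + 2 * b * sqrt c"
    using assms(2,3) by simp
  also have "\<dots> = (b + sqrt c)\<^sup>2"
    using assms(3) by (simp add: power2_eq_square algebra_simps)
  finally show "a\<^sup>2 \<le> (b + sqrt c)\<^sup>2"
    using assms(1) by linarith
qed (use assms in simp)

lemma bounded_perp_drift_of_subfamilies:
  fixes F :: "'a::euclidean_space set set"
  assumes "finite F" "\<forall>A\<in>F. affine A \<and> A \<noteq> {}" "0 \<le> lam" "lam < 2"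
    and "\<And>J. J \<subset> F \<Longrightarrow> bounded_perp_drift J lam"
  shows "bounded_perp_drift F lam"
proof -
  obtain \<Gamma> D where "0 \<le> \<Gamma>" "0 \<le> D" and returns:
    "\<forall>x k. relaxation_orbit F lam x \<longrightarrow>
       (perp_norm F (x k))\<^sup>2 \<le> max ((perp_norm F (x 0))\<^sup>2) \<Gamma> + D
       \<or> (\<exists>e. 0 < e \<and> e \<le> k \<and> (perp_norm F (x e))\<^sup>2 \<le> max ((perp_norm F (x 0))\<^sup>2) \<Gamma>)"
    using relaxation_orbit_returns[OF assms] by blast
  have "perp_norm F (x k) \<le> perp_norm F (x 0) + sqrt (\<Gamma> + D)"
    if x: "relaxation_orbit F lam x" for x k
  proof (rule le_add_sqrt_if_sq_le)
    have "(perp_norm F (x k))\<^sup>2 \<le> max ((perp_norm F (x 0))\<^sup>2) \<Gamma> + D"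
    proof (rule bound_by_returns[where f = "\<lambda>n. (perp_norm F (x n))\<^sup>2"])
      fix e j
      from returns[rule_format, OF relaxation_orbit_shift[OF x, of e], of j]
      show "(perp_norm F (x (e + j)))\<^sup>2 \<le> max ((perp_norm F (x e))\<^sup>2) \<Gamma> + D
        \<or> (\<exists>i. 0 < i \<and> i \<le> j \<and> (perp_norm F (x (e + i)))\<^sup>2 \<le> max ((perp_norm F (x e))\<^sup>2) \<Gamma>)"
        by (simp add: ac_simps)
    qed
    moreover have "max ((perp_norm F (x 0))\<^sup>2) \<Gamma> \<le> (perp_norm F (x 0))\<^sup>2 + \<Gamma>"
      using \<open>0 \<le> \<Gamma>\<close> by simp
    ultimately show "(perp_norm F (x k))\<^sup>2 \<le> (perp_norm F (x 0))\<^sup>2 + (\<Gamma> + D)"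
      by linarith
  qed (use \<open>0 \<le> \<Gamma>\<close> \<open>0 \<le> D\<close> in simp_all)
  then show ?thesis
    unfolding bounded_perp_drift_def by blast
qed

lemma bounded_perp_drift:
  fixes F :: "'a::euclidean_space set set"
  assumes "finite F" "\<forall>A\<in>F. affine A \<and> A \<noteq> {}" "0 \<le> lam" "lam < 2"
  shows "bounded_perp_drift F lam"
  using assms(1,2)
proof (induction F rule: finite_psubset_induct)
  case (psubset F)
  have "bounded_perp_drift J lam" if "J \<subset> F" for J
    using psubset.IH[OF that] psubset.prems that by blast
  then show ?case
    using bounded_perp_drift_of_subfamilies[OF psubset.hyps psubset.prems assms(3,4)] by blast
qed

lemma relaxation_orbit_bounded:
  fixes F :: "'a::euclidean_space set set"
  assumes "finite F" and F: "\<forall>A\<in>F. affine A \<and> A \<noteq> {}" and "0 \<le> lam" "lam < 2"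
    and x: "relaxation_orbit F lam x"
  shows "bounded (range x)"
proof -
  let ?P = "closest_point (common_directions F)"
  obtain M where M: "\<And>n. perp_norm F (x n) \<le> perp_norm F (x 0) + M"
    using bounded_perp_drift[OF assms(1-4)] x unfolding bounded_perp_drift_def by blast
  have P: "?P (x n) = ?P (x 0)" for n
  proof (induction n)
    case (Suc n)
    obtain A \<mu> where "A \<in> F" "x (Suc n) = relaxed_projection A \<mu> (x n)"
      using x unfolding relaxation_orbit_def by blast
    then show ?case
      using closest_point_common_directions_relaxed_projection[OF F] Suc.IH by simp
  qed simp
  have "norm (x n) \<le> norm (?P (x 0)) + perp_norm F (x 0) + M" for n
    using norm_triangle_ineq[of "?P (x n)" "x n - ?P (x n)"] M[of n] P[of n]
    by (simp add: perp_norm_def)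
  then show ?thesis
    by (intro boundedI) auto
qed

section \<open>Polyhedra\<close>

lemma exists_step_in_halfspaces:
  fixes a :: "'i \<Rightarrow> 'a::euclidean_space" and b :: "'i \<Rightarrow> real"
  assumes "finite H" and p: "\<forall>h\<in>H. a h \<bullet> p \<le> b h"
    and active: "\<forall>h\<in>H. a h \<bullet> p = b h \<longrightarrow> a h \<bullet> z = b h"
  shows "\<exists>t>0. \<forall>h\<in>H. a h \<bullet> (p + t *\<^sub>R (z - p)) \<le> b h"
proof -
  have "\<forall>\<^sub>F t in at_right 0. \<forall>h\<in>H. a h \<bullet> (p + t *\<^sub>R (z - p)) \<le> b h"
  proof (rule eventually_ball_finite[OF assms(1)], rule ballI)
    fix h assume h: "h \<in> H"
    show "\<forall>\<^sub>F t in at_right 0. a h \<bullet> (p + t *\<^sub>R (z - p)) \<le> b h"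
    proof (cases "a h \<bullet> p = b h")
      case True
      then show ?thesis
        using active h by (simp add: inner_add_right inner_diff_right algebra_simps)
    next
      case False
      then have "a h \<bullet> p < b h"
        using p h by force
      moreover have "((\<lambda>t. a h \<bullet> (p + t *\<^sub>R (z - p))) \<longlongrightarrow> a h \<bullet> (p + 0 *\<^sub>R (z - p))) (at_right 0)"
        by (intro tendsto_intros)
      ultimately have "\<forall>\<^sub>F t in at_right 0. a h \<bullet> (p + t *\<^sub>R (z - p)) < b h"
        by (intro order_tendstoD(2)) simp_all
      then show ?thesis
        by (rule eventually_mono) simp
    qed
  qed
  moreover have "\<forall>\<^sub>F t in at_right (0::real). 0 < t"
    by (simp add: eventually_at_right_less)
  ultimately have "\<forall>\<^sub>F t in at_right 0. 0 < t \<and> (\<forall>h\<in>H. a h \<bullet> (p + t *\<^sub>R (z - p)) \<le> b h)"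
    by (simp add: eventually_conj_iff)
  from eventually_happens'[OF trivial_limit_at_right_real this] show ?thesis
    by blast
qed

lemma affine_hyperplanes: "affine {y. \<forall>h\<in>I. a h \<bullet> y = b h}"
proof -
  have "{y. \<forall>h\<in>I. a h \<bullet> y = b h} = (\<Inter>h\<in>I. {y. a h \<bullet> y = b h})"
    by auto
  then show ?thesis
    by (auto intro!: affine_Inter affine_hyperplane)
qed

lemma closest_point_halfspaces_eq_active:
  fixes a :: "'i \<Rightarrow> 'a::euclidean_space" and b :: "'i \<Rightarrow> real" and x :: 'a
  assumes "finite H" and C: "C = {y. \<forall>h\<in>H. a h \<bullet> y \<le> b h}" "C \<noteq> {}"
  defines "I \<equiv> {h\<in>H. a h \<bullet> closest_point C x = b h}"
  shows "closest_point {y. \<forall>h\<in>I. a h \<bullet> y = b h} x = closest_point C x"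
proof -
  define p A where "p = closest_point C x" and "A = {y. \<forall>h\<in>I. a h \<bullet> y = b h}"
  have C_INT: "C = (\<Inter>h\<in>H. {y. a h \<bullet> y \<le> b h})"
    by (auto simp: C)
  have "closed C" "convex C"
    unfolding C_INT by (auto intro!: closed_INT convex_INT closed_halfspace_le convex_halfspace_le)
  then have "p \<in> C"
    using C(2) by (simp add: p_def closest_point_in_set)
  have "affine A"
    unfolding A_def by (rule affine_hyperplanes)
  moreover have "p \<in> A"
    by (simp add: A_def I_def p_def)
  moreover have "(x - p) \<bullet> (z - p) \<le> 0" if "z \<in> A" for z
  proof -
    have "\<forall>h\<in>H. a h \<bullet> p = b h \<longrightarrow> a h \<bullet> z = b h"
      using that by (simp add: A_def I_def p_def)
    moreover have "\<forall>h\<in>H. a h \<bullet> p \<le> b h"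
      using \<open>p \<in> C\<close> C(1) by simp
    ultimately obtain t where "0 < t" "\<forall>h\<in>H. a h \<bullet> (p + t *\<^sub>R (z - p)) \<le> b h"
      using exists_step_in_halfspaces[OF assms(1)] by blast
    then have "p + t *\<^sub>R (z - p) \<in> C"
      by (simp add: C)
    from closest_point_dot[OF \<open>convex C\<close> \<open>closed C\<close> this, of x]
    have "(x - p) \<bullet> ((p + t *\<^sub>R (z - p)) - p) \<le> 0"
      by (simp add: p_def)
    then show ?thesis
      using \<open>0 < t\<close> by (simp add: mult_le_0_iff)
  qed
  ultimately show ?thesis
    using closest_point_eqI[of A p x] by (simp add: A_def p_def affine_imp_convex affine_closed)
qed

lemma polyhedron_closest_point_affine_pieces:
  fixes C :: "'a::euclidean_space set"
  assumes "polyhedron C" "C \<noteq> {}"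
  shows "\<exists>\<A>. finite \<A> \<and> (\<forall>A\<in>\<A>. affine A \<and> A \<noteq> {})
           \<and> (\<forall>x. \<exists>A\<in>\<A>. closest_point C x = closest_point A x)"
proof -
  obtain H where H: "finite H" "C = \<Inter> H" "\<forall>h\<in>H. \<exists>a b. a \<noteq> 0 \<and> h = {x. a \<bullet> x \<le> b}"
    using assms(1) unfolding polyhedron_def by blast
  then have "\<forall>h\<in>H. \<exists>a b. h = {x. a \<bullet> x \<le> b}"
    by blast
  from bchoice[OF this] obtain a where "\<forall>h\<in>H. \<exists>b. h = {x. a h \<bullet> x \<le> b}"
    by blast
  from bchoice[OF this] obtain b where ab: "\<forall>h\<in>H. h = {x. a h \<bullet> x \<le> b h}"
    by blast
  have "y \<in> h \<longleftrightarrow> a h \<bullet> y \<le> b h" if "h \<in> H" for h y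
    using arg_cong[where f = "\<lambda>S. y \<in> S", OF bspec[OF ab that]] by simp
  then have C: "C = {y. \<forall>h\<in>H. a h \<bullet> y \<le> b h}"
    unfolding H(2) by blast
  define flat where "flat I = {y. \<forall>h\<in>I. a h \<bullet> y = b h}" for I
  define active where "active x = {h\<in>H. a h \<bullet> closest_point C x = b h}" for x
  define \<A> where "\<A> = {A \<in> flat ` Pow H. A \<noteq> {}}"
  have "finite \<A>"
    using H(1) by (simp add: \<A>_def)
  moreover have "\<forall>A\<in>\<A>. affine A \<and> A \<noteq> {}"
    using affine_hyperplanes unfolding \<A>_def flat_def by auto
  moreover have "\<exists>A\<in>\<A>. closest_point C x = closest_point A x" for x
  proof
    have "closest_point C x \<in> flat (active x)"
      by (simp add: flat_def active_def)
    moreover have "flat (active x) \<in> flat ` Pow H"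
      by (rule imageI) (auto simp: active_def)
    ultimately show "flat (active x) \<in> \<A>"
      by (auto simp: \<A>_def)
    show "closest_point C x = closest_point (flat (active x)) x"
      using closest_point_halfspaces_eq_active[OF H(1) C assms(2), of x]
      by (simp add: flat_def active_def)
  qed
  ultimately show ?thesis
    by (intro exI[of _ \<A>] conjI allI)
qed

lemma relaxation_orbit_affine_pieces:
  fixes \<C> :: "'a::euclidean_space set set"
  assumes "finite \<C>" "\<forall>C\<in>\<C>. polyhedron C \<and> C \<noteq> {}"
    and orbit: "\<forall>n. \<exists>R\<in>relaxed_projectors \<C> {0..lam}. x (Suc n) = R (x n)"
  shows "\<exists>\<A>. finite \<A> \<and> (\<forall>A\<in>\<A>. affine A \<and> A \<noteq> {}) \<and> relaxation_orbit \<A> lam x"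
proof -
  have "\<forall>C\<in>\<C>. \<exists>\<A>. finite \<A> \<and> (\<forall>A\<in>\<A>. affine A \<and> A \<noteq> {})
          \<and> (\<forall>y. \<exists>A\<in>\<A>. closest_point C y = closest_point A y)"
    using assms(2) polyhedron_closest_point_affine_pieces by blast
  from bchoice[OF this] obtain pieces where
    "\<forall>C\<in>\<C>. finite (pieces C) \<and> (\<forall>A\<in>pieces C. affine A \<and> A \<noteq> {})
      \<and> (\<forall>y. \<exists>A\<in>pieces C. closest_point C y = closest_point A y)"
    by blast
  then have pieces: "\<And>C. C \<in> \<C> \<Longrightarrow> finite (pieces C)"
    "\<And>C. C \<in> \<C> \<Longrightarrow> \<forall>A\<in>pieces C. affine A \<and> A \<noteq> {}"
    "\<And>C y. C \<in> \<C> \<Longrightarrow> \<exists>A\<in>pieces C. closest_point C y = closest_point A y"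
    by blast+
  define \<A> where "\<A> = \<Union> (pieces ` \<C>)"
  have "relaxation_orbit \<A> lam x"
    unfolding relaxation_orbit_def
  proof
    fix n
    obtain R where "R \<in> relaxed_projectors \<C> {0..lam}" "x (Suc n) = R (x n)"
      using orbit by blast
    then obtain C \<mu> where C: "C \<in> \<C>" "\<mu> \<in> {0..lam}" "x (Suc n) = relaxed_projection C \<mu> (x n)"
      by (auto simp: relaxed_projectors_eq)
    obtain A where A: "A \<in> pieces C" "closest_point C (x n) = closest_point A (x n)"
      using pieces(3)[OF C(1)] by blast
    have "x (Suc n) = relaxed_projection A \<mu> (x n)"
      using C(3) A(2) by (simp add: relaxed_projection_def)
    moreover have "A \<in> \<A>"
      using A(1) C(1) by (auto simp: \<A>_def)
    ultimately show "\<exists>A\<in>\<A>. \<exists>\<mu>\<in>{0..lam}. x (Suc n) = relaxed_projection A \<mu> (x n)"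
      using C(2) by blast
  qed
  moreover have "finite \<A>" "\<forall>A\<in>\<A>. affine A \<and> A \<noteq> {}"
    using assms(1) pieces(1,2) by (auto simp: \<A>_def)
  ultimately show ?thesis
    by blast
qed

theorem theorem2p6:
  fixes \<C> :: "'a::euclidean_space set set"
    and lam :: real
    and x :: "nat \<Rightarrow> 'a"
  assumes "finite \<C>" and "\<C> \<noteq> {}"
    and "\<forall>C\<in>\<C>. polyhedron C \<and> C \<noteq> {}"
    and "0 \<le> lam" and "lam < 2"
    and "\<forall>n. \<exists>R\<in>relaxed_projectors \<C> {0..lam}. x (Suc n) = R (x n)"
  shows "bounded (range x)"
proof -
  obtain \<A> where "finite \<A>" "\<forall>A\<in>\<A>. affine A \<and> A \<noteq> {}" "relaxation_orbit \<A> lam x"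
    using relaxation_orbit_affine_pieces[OF assms(1,3,6)] by blast
  then show ?thesis
    using relaxation_orbit_bounded assms(4,5) by blast
qed

end
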